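(* For every formula $A$ of $\mathbf{L_1}$: $\dashv_H A$ if and only if $\dashv_T A$.
   Context: Formulas of $\mathbf{L_1}$: built from atomic formulas $\epsilon ab$ ($a,b$ name variables, possibly equal) with primitive connectives $\vee,\sim$; $\wedge,\supset,\equiv$ defined as usual. Disjunctions may be associated in any way. $\vdash_H A$: $A$ belongs to the smallest set containing all instances of classical propositional tautologies and all formulas $\epsilon ab\supset\epsilon aa$, $(\epsilon ab\wedge\epsilon bc)\supset\epsilon ac$, $(\epsilon ab\wedge\epsilon bb)\supset\epsilon ba$, closed under modus ponens. Positive/negative parts (occurrences): $A$ is a positive part of $A$; if $B\vee C$ is a positive part then $B,C$ are positive parts; if $\sim B$ is a positive part then $B$ is a negative part; if $\sim B$ is a negative part then $B$ is a positive part. $F[B_+]$ ($G[B_-]$) denotes a formula with a specified occurrence of $B$ as positive (negative) part; $F[B_+,C_-]$ etc. denote specified non-overlapping occurrences. Tableaux: reduction rules ($\vee_-$) $G[B\vee C_-]$ $\mapsto$ two branches $G[B\vee C_-]\vee\sim B$, $G[B\vee C_-]\vee\sim C$; ($\epsilon_1$) $G[\epsilon ab_-]\mapsto G[\epsilon ab_-]\vee\sim\epsilon aa$; ($\epsilon_2$) $G[\epsilon ab_-,\epsilon bc_-]\mapsto G[\epsilon ab_-,\epsilon bc_-]\vee\sim\epsilon ac$; ($\epsilon_{3b}$) $G[\epsilon ab_-,\epsilon bb_-]\mapsto G[\epsilon ab_-,\epsilon bb_-]\vee\sim\epsilon ba$. A tableau for $A$ is a finite tree with root $A$ whose non-leaf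 nodes have as children the result of applying one rule. Hintikka formula: a formula $H$ such that (1) $H$ is not of the form $F[B_+,B_-]$; (2) if $B\vee C$ is a negative part of $H$ then $B$ or $C$ is; (3) if $\epsilon ab$ is a negative part then so is $\epsilon aa$; (4) if $\epsilon ab,\epsilon bc$ are negative parts then so is $\epsilon ac$; (5) if $\epsilon ab,\epsilon bb$ are negative parts then so is $\epsilon ba$. $\mathbf{HAR}$: fix a name variable $a_0$; $\dashv_H$ is the smallest set such that $\dashv_H\epsilon a_0a_0$; $\dashv_H\sim\epsilon a_0a_0$; if $\vdash_H A\supset B$ and $\dashv_H B$ then $\dashv_H A$; if $\dashv_H A$ and $A$ is obtained from $B$ by uniform substitution of name variables for name variables then $\dashv_H B$; if $A$ is a Hintikka formula that is a disjunction of atomic or negated atomic formulas, $\dashv_H A$, and $\epsilon ab$ is not a negative part of $A$, then $\dashv_H A\vee\epsilon ab$. Gentzen-type axiomatic rejection $\mathbf{GAR}$: $\dashv_T A$ means that there exists a tableau for $A$ at least one branch of which ends with a Hintikka formula. *)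

theory Defs
  imports Main "HOL-Library.Multiset"
begin

datatype fm = Eps nat nat | Or fm fm | Neg fm

definition And :: "fm \<Rightarrow> fm \<Rightarrow> fm" where
  "And A B = Neg (Or (Neg A) (Neg B))"
definition Imp :: "fm \<Rightarrow> fm \<Rightarrow> fm" where
  "Imp A B = Or (Neg A) B"
definition Iff :: "fm \<Rightarrow> fm \<Rightarrow> fm" where
  "Iff A B = And (Imp A B) (Imp B A)"

datatype pform = PVar nat | POr pform pform | PNeg pform

primrec peval :: "(nat \<Rightarrow> bool) \<Rightarrow> pform \<Rightarrow> bool" where
  "peval v (PVar n) = v n"
| "peval v (POr P Q) = (peval v P \<or> peval v Q)"
| "peval v (PNeg P) = (\<not> peval v P)"

definition ptaut :: "pform \<Rightarrow> bool" where
  "ptaut P = (\<forall>v. peval v P)"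

primrec inst :: "(nat \<Rightarrow> fm) \<Rightarrow> pform \<Rightarrow> fm" where
  "inst s (PVar n) = s n"
| "inst s (POr P Q) = Or (inst s P) (inst s Q)"
| "inst s (PNeg P) = Neg (inst s P)"

inductive thmH :: "fm \<Rightarrow> bool" where
  taut: "ptaut P \<Longrightarrow> thmH (inst s P)"
| ax1: "thmH (Imp (Eps a b) (Eps a a))"
| ax2: "thmH (Imp (And (Eps a b) (Eps b c)) (Eps a c))"
| ax3: "thmH (Imp (And (Eps a b) (Eps b b)) (Eps b a))"
| mp: "thmH (Imp A B) \<Longrightarrow> thmH A \<Longrightarrow> thmH B"

section \<open>Positive and negative parts, as a multiset of occurrences tagged with polarity
  (True = positive, False = negative)\<close>

fun parts :: "bool \<Rightarrow> fm \<Rightarrow> (bool \<times> fm) multiset" where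
  "parts p (Eps a b) = {#(p, Eps a b)#}"
| "parts p (Or B C) = add_mset (p, Or B C) (if p then parts p B + parts p C else {#})"
| "parts p (Neg B) = add_mset (p, Neg B) (parts (\<not> p) B)"

definition posp :: "fm \<Rightarrow> fm \<Rightarrow> bool" where
  "posp B A = ((True, B) \<in># parts True A)"
definition negp :: "fm \<Rightarrow> fm \<Rightarrow> bool" where
  "negp B A = ((False, B) \<in># parts True A)"

definition hintikka :: "fm \<Rightarrow> bool" where
  "hintikka H = (
     (\<nexists>B. posp B H \<and> negp B H) \<and>
     (\<forall>B C. negp (Or B C) H \<longrightarrow> negp B H \<or> negp C H) \<and>
     (\<forall>a b. negp (Eps a b) H \<longrightarrow> negp (Eps a a) H) \<and>
     (\<forall>a b c. negp (Eps a b) H \<and> negp (Eps b c) H \<longrightarrow> negp (Eps a c) H) \<and>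
     (\<forall>a b. negp (Eps a b) H \<and> negp (Eps b b) H \<longrightarrow> negp (Eps b a) H))"

text \<open>rule_app G Cs: applying one reduction rule to G yields the children Cs.
  Two specified occurrences must be non-overlapping, hence the sub-multiset condition.\<close>
definition rule_app :: "fm \<Rightarrow> fm list \<Rightarrow> bool" where
  "rule_app G Cs = (
     (\<exists>B C. negp (Or B C) G \<and> Cs = [Or G (Neg B), Or G (Neg C)]) \<or>
     (\<exists>a b. negp (Eps a b) G \<and> Cs = [Or G (Neg (Eps a a))]) \<or>
     (\<exists>a b c. {#(False, Eps a b), (False, Eps b c)#} \<subseteq># parts True G
              \<and> Cs = [Or G (Neg (Eps a c))]) \<or>
     (\<exists>a b. {#(False, Eps a b), (False, Eps b b)#} \<subseteq># parts True G
              \<and> Cs = [Or G (Neg (Eps b a))]))"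

datatype ttree = TNode fm "ttree list"

primrec troot :: "ttree \<Rightarrow> fm" where
  "troot (TNode G ts) = G"

inductive is_tableau :: "ttree \<Rightarrow> bool" where
  leaf: "is_tableau (TNode G [])"
| node: "rule_app G (map troot ts) \<Longrightarrow> \<forall>t\<in>set ts. is_tableau t \<Longrightarrow> is_tableau (TNode G ts)"

inductive hintikka_branch :: "ttree \<Rightarrow> bool" where
  leaf: "hintikka G \<Longrightarrow> hintikka_branch (TNode G [])"
| node: "t \<in> set ts \<Longrightarrow> hintikka_branch t \<Longrightarrow> hintikka_branch (TNode G ts)"

definition rejT :: "fm \<Rightarrow> bool" where
  "rejT A = (\<exists>T. is_tableau T \<and> troot T = A \<and> hintikka_branch T)"

primrec subst :: "(nat \<Rightarrow> nat) \<Rightarrow> fm \<Rightarrow> fm" where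
  "subst s (Eps a b) = Eps (s a) (s b)"
| "subst s (Or A B) = Or (subst s A) (subst s B)"
| "subst s (Neg A) = Neg (subst s A)"

inductive litdisj :: "fm \<Rightarrow> bool" where
  "litdisj (Eps a b)"
| "litdisj (Neg (Eps a b))"
| "litdisj A \<Longrightarrow> litdisj B \<Longrightarrow> litdisj (Or A B)"

inductive rejH :: "nat \<Rightarrow> fm \<Rightarrow> bool" for a0 :: nat where
  ax_pos: "rejH a0 (Eps a0 a0)"
| ax_neg: "rejH a0 (Neg (Eps a0 a0))"
| mt: "thmH (Imp A B) \<Longrightarrow> rejH a0 B \<Longrightarrow> rejH a0 A"
| sub: "rejH a0 A \<Longrightarrow> A = subst s B \<Longrightarrow> rejH a0 B"
| ext: "hintikka A \<Longrightarrow> litdisj A \<Longrightarrow> rejH a0 A \<Longrightarrow> \<not> negp (Eps a b) A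
        \<Longrightarrow> rejH a0 (Or A (Eps a b))"

end

theory Submission
  imports Defs "HOL-Library.Nat_Bijection"
begin

text \<open>Both rejection notions coincide with falsifiability in some relation \<open>\<epsilon>\<close> satisfying
  the three axioms. A Hintikka formula is falsified by the relation holding exactly on its
  negative atoms, and every rule of HAR and every tableau step transports falsifiability back
  to the rejected formula; this gives soundness. For completeness of HAR, a falsifiable \<open>A\<close>
  implies the diagram of a countermodel on the names of \<open>A\<close>, a disjunction of literals that is
  rejected by collapsing all names to \<open>a\<^sub>0\<close> and then applying the extension rule, every
  intermediate disjunction being Hintikka. For completeness of tableaux, a countermodel guides
  the expansion: each step adds a negative part true in the countermodel, and the negative parts
  stay inside the finite set of subformulas of \<open>A\<close> and atoms over its names, so the expansion
  ends in a Hintikka formula.\<close>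

section \<open>Semantics\<close>

fun eval :: "(nat \<Rightarrow> nat \<Rightarrow> bool) \<Rightarrow> fm \<Rightarrow> bool" where
  "eval e (Eps a b) = e a b"
| "eval e (Or A B) = (eval e A \<or> eval e B)"
| "eval e (Neg A) = (\<not> eval e A)"

lemma eval_Imp [simp]: "eval e (Imp A B) = (eval e A \<longrightarrow> eval e B)"
  by (simp add: Imp_def)

lemma eval_And [simp]: "eval e (And A B) = (eval e A \<and> eval e B)"
  by (simp add: And_def)

definition eps_model :: "(nat \<Rightarrow> nat \<Rightarrow> bool) \<Rightarrow> bool" where
  "eps_model e \<longleftrightarrow> (\<forall>a b. e a b \<longrightarrow> e a a) \<and> (\<forall>a b c. e a b \<and> e b c \<longrightarrow> e a c)
     \<and> (\<forall>a b. e a b \<and> e b b \<longrightarrow> e b a)"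

lemma eps_modelI:
  "(\<And>a b. e a b \<Longrightarrow> e a a) \<Longrightarrow> (\<And>a b c. e a b \<Longrightarrow> e b c \<Longrightarrow> e a c)
   \<Longrightarrow> (\<And>a b. e a b \<Longrightarrow> e b b \<Longrightarrow> e b a) \<Longrightarrow> eps_model e"
  unfolding eps_model_def by blast

lemma eps_model_refl: "eps_model e \<Longrightarrow> e a b \<Longrightarrow> e a a"
  and eps_model_trans: "eps_model e \<Longrightarrow> e a b \<Longrightarrow> e b c \<Longrightarrow> e a c"
  and eps_model_sym: "eps_model e \<Longrightarrow> e a b \<Longrightarrow> e b b \<Longrightarrow> e b a"
  unfolding eps_model_def by blast+

lemma eps_model_restrict: "eps_model e \<Longrightarrow> eps_model (\<lambda>a b. a \<in> N \<and> b \<in> N \<and> e a b)"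
  by (rule eps_modelI) (blast intro: eps_model_refl eps_model_trans eps_model_sym)+

lemma eps_model_rename: "eps_model e \<Longrightarrow> eps_model (\<lambda>a b. e (s a) (s b))"
  by (rule eps_modelI) (blast intro: eps_model_refl eps_model_trans eps_model_sym)+

definition valid :: "fm \<Rightarrow> bool" where
  "valid A \<longleftrightarrow> (\<forall>e. eps_model e \<longrightarrow> eval e A)"

primrec names :: "fm \<Rightarrow> nat set" where
  "names (Eps a b) = {a, b}"
| "names (Or A B) = names A \<union> names B"
| "names (Neg A) = names A"

lemma finite_names: "finite (names A)"
  by (induction A) auto

lemma names_nonempty: "names A \<noteq> {}"
  by (induction A) auto

lemma eval_cong:
  "(\<And>a b. a \<in> names A \<Longrightarrow> b \<in> names A \<Longrightarrow> e a b = e' a b) \<Longrightarrow> eval e A = eval e' A"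
  by (induction A) auto

lemma eval_subst: "eval e (subst s A) = eval (\<lambda>a b. e (s a) (s b)) A"
  by (induction A) auto

section \<open>Soundness and completeness of the Hilbert system\<close>

primrec skeleton :: "fm \<Rightarrow> pform" where
  "skeleton (Eps a b) = PVar (prod_encode (a, b))"
| "skeleton (Or A B) = POr (skeleton A) (skeleton B)"
| "skeleton (Neg A) = PNeg (skeleton A)"

lemma inst_skeleton: "inst (\<lambda>n. case prod_decode n of (a, b) \<Rightarrow> Eps a b) (skeleton A) = A"
  by (induction A) simp_all

lemma peval_skeleton: "peval v (skeleton A) = eval (\<lambda>a b. v (prod_encode (a, b))) A"
  by (induction A) simp_all

lemma eval_inst: "eval e (inst s P) = peval (\<lambda>n. eval e (s n)) P"
  by (induction P) simp_all

lemma thmH_tautology: "(\<And>e. eval e A) \<Longrightarrow> thmH A"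
  using thmH.taut[of "skeleton A" "\<lambda>n. case prod_decode n of (a, b) \<Rightarrow> Eps a b"]
  by (simp add: ptaut_def peval_skeleton inst_skeleton)

lemma thmH_consequence: "thmH A \<Longrightarrow> (\<And>e. eval e A \<Longrightarrow> eval e B) \<Longrightarrow> thmH B"
  by (metis eval_Imp thmH_tautology thmH.mp)

lemma thmH_And: "thmH A \<Longrightarrow> thmH B \<Longrightarrow> thmH (And A B)"
  using thmH_tautology[of "Imp A (Imp B (And A B))"] thmH.mp by auto

lemma thmH_sound: "thmH A \<Longrightarrow> eps_model e \<Longrightarrow> eval e A"
  by (induction rule: thmH.induct)
    (auto simp: eval_inst ptaut_def intro: eps_model_refl eps_model_trans eps_model_sym)

primrec conj_list :: "fm list \<Rightarrow> fm" where
  "conj_list [] = Imp (Eps 0 0) (Eps 0 0)"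
| "conj_list (A # As) = And A (conj_list As)"

lemma eval_conj_list: "eval e (conj_list As) = (\<forall>A\<in>set As. eval e A)"
  by (induction As) auto

lemma thmH_conj_list: "\<forall>A\<in>set As. thmH A \<Longrightarrow> thmH (conj_list As)"
proof (induction As)
  case Nil
  then show ?case by (simp add: thmH_tautology)
next
  case (Cons A As)
  then show ?case by (simp add: thmH_And)
qed

definition axiom_instances :: "nat list \<Rightarrow> fm list" where
  "axiom_instances ns =
     map (\<lambda>(a, b). Imp (Eps a b) (Eps a a)) (List.product ns ns)
     @ map (\<lambda>(a, b, c). Imp (And (Eps a b) (Eps b c)) (Eps a c)) (List.product ns (List.product ns ns))
     @ map (\<lambda>(a, b). Imp (And (Eps a b) (Eps b b)) (Eps b a)) (List.product ns ns)"

lemma thmH_axiom_instances: "thmH (conj_list (axiom_instances ns))"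
  by (rule thmH_conj_list) (auto simp: axiom_instances_def intro: thmH.intros)

text \<open>A valid formula follows tautologically from the finitely many axiom instances over its
  names: any valuation of the instances, cut down to those names, is a model.\<close>

lemma thmH_complete:
  assumes "valid A"
  shows "thmH A"
proof -
  obtain ns where ns: "set ns = names A"
    using finite_list[OF finite_names] by blast
  have "eval e A" if "eval e (conj_list (axiom_instances ns))" for e
  proof -
    define e' where "e' a b \<longleftrightarrow> e a b \<and> a \<in> names A \<and> b \<in> names A" for a b
    have ax: "\<forall>B\<in>set (axiom_instances ns). eval e B"
      using that by (simp add: eval_conj_list)
    have "eps_model e'"
      by (rule eps_modelI) (use ax ns in \<open>force simp: axiom_instances_def e'_def\<close>)+
    then have "eval e' A"
      using assms valid_def by blast
    moreover have "eval e' A = eval e A"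
      by (rule eval_cong) (simp add: e'_def)
    ultimately show ?thesis by simp
  qed
  then show ?thesis
    using thmH_consequence[OF thmH_axiom_instances] by blast
qed

lemma rejH_valid_Imp: "valid (Imp A B) \<Longrightarrow> rejH a0 B \<Longrightarrow> rejH a0 A"
  by (blast intro: rejH.mt thmH_complete)

section \<open>Positive and negative parts\<close>

lemma parts_self: "(p, A) \<in># parts p A"
  by (cases A) auto

lemma parts_trans: "(r, C) \<in># parts p B \<Longrightarrow> (p, B) \<in># parts q A \<Longrightarrow> (r, C) \<in># parts q A"
proof (induction A arbitrary: q)
  case (Or A1 A2)
  then show ?case by (cases q) auto
qed auto

lemma eval_parts: "eval e A \<noteq> q \<Longrightarrow> (p, B) \<in># parts q A \<Longrightarrow> eval e B \<noteq> p"
proof (induction A arbitrary: q)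
  case (Or A1 A2)
  then show ?case by (cases q) (simp_all, metis eval.simps(2))
next
  case (Neg A)
  then show ?case by (simp, metis)
qed simp

lemma negp_true: "\<not> eval e A \<Longrightarrow> negp B A \<Longrightarrow> eval e B"
  using eval_parts[of e A True False B] by (simp add: negp_def)

lemma posp_false: "\<not> eval e A \<Longrightarrow> posp B A \<Longrightarrow> \<not> eval e B"
  using eval_parts[of e A True True B] by (simp add: posp_def)

lemma negp_Or_Neg: "negp C (Or A (Neg B)) \<longleftrightarrow> negp C A \<or> (False, C) \<in># parts False B"
  by (auto simp: negp_def)

lemma hintikka_countermodel:
  assumes "hintikka H"
  shows "eps_model (\<lambda>a b. negp (Eps a b) H)" and "\<not> eval (\<lambda>a b. negp (Eps a b) H) H"
proof -
  let ?e = "\<lambda>a b. negp (Eps a b) H"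
  have consistent: "\<not> (posp B H \<and> negp B H)" for B
    using assms unfolding hintikka_def by blast
  show "eps_model ?e"
    by (rule eps_modelI) (use assms in \<open>unfold hintikka_def, blast\<close>)+
  have "(posp B H \<longrightarrow> \<not> eval ?e B) \<and> (negp B H \<longrightarrow> eval ?e B)" for B
  proof (induction B)
    case (Eps a b)
    then show ?case using consistent by simp
  next
    case (Or B C)
    have "posp (Or B C) H \<Longrightarrow> posp B H \<and> posp C H"
      using parts_trans[of True B True "Or B C"] parts_trans[of True C True "Or B C"]
      by (simp add: posp_def parts_self)
    moreover have "negp (Or B C) H \<Longrightarrow> negp B H \<or> negp C H"
      using assms unfolding hintikka_def by blast
    ultimately show ?case using Or by auto
  next
    case (Neg B)
    have "posp (Neg B) H \<Longrightarrow> negp B H" "negp (Neg B) H \<Longrightarrow> posp B H"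
      using parts_trans[of False B True "Neg B"] parts_trans[of True B False "Neg B"]
      by (simp_all add: posp_def negp_def parts_self)
    then show ?case using Neg by auto
  qed
  then show "\<not> eval ?e H"
    by (simp add: posp_def parts_self)
qed

lemma hintikka_not_valid: "hintikka H \<Longrightarrow> \<not> valid H"
  using hintikka_countermodel valid_def by blast

section \<open>Soundness of both rejection systems\<close>

lemma rejH_sound: "rejH a0 A \<Longrightarrow> \<not> valid A"
proof (induction rule: rejH.induct)
  case ax_pos
  have "eps_model (\<lambda>a b. False)" by (rule eps_modelI) auto
  then show ?case by (auto simp: valid_def)
next
  case ax_neg
  have "eps_model (\<lambda>a b. True)" by (rule eps_modelI) auto
  then show ?case by (auto simp: valid_def)
next
  case (mt A B)
  then show ?case using thmH_sound by (fastforce simp: valid_def)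
next
  case (sub A s B)
  then show ?case by (auto simp: valid_def eval_subst dest: eps_model_rename)
next
  case (ext A a b)
  then show ?case using hintikka_countermodel by (auto simp: valid_def)
qed

lemma rule_app_child: "rule_app G Cs \<Longrightarrow> C \<in> set Cs \<Longrightarrow> \<exists>B. C = Or G (Neg B)"
  unfolding rule_app_def by auto

lemma hintikka_branch_not_valid: "hintikka_branch T \<Longrightarrow> is_tableau T \<Longrightarrow> \<not> valid (troot T)"
proof (induction rule: hintikka_branch.induct)
  case (leaf G)
  then show ?case by (simp add: hintikka_not_valid)
next
  case (node t ts G)
  then have "rule_app G (map troot ts)" "\<not> valid (troot t)"
    by (auto elim: is_tableau.cases)
  then show ?case
    using rule_app_child[of G "map troot ts" "troot t"] node.hyps(1) by (auto simp: valid_def)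
qed

lemma rejT_sound: "rejT A \<Longrightarrow> \<not> valid A"
  unfolding rejT_def using hintikka_branch_not_valid by blast

section \<open>Completeness of tableaux\<close>

lemma rejT_hintikka: "hintikka G \<Longrightarrow> rejT G"
  unfolding rejT_def
  by (auto intro: is_tableau.leaf hintikka_branch.leaf exI[of _ "TNode G []"])

lemma rejT_rule_app:
  assumes "rule_app G Cs" "C \<in> set Cs" "rejT C"
  shows "rejT G"
proof -
  obtain T where T: "is_tableau T" "troot T = C" "hintikka_branch T"
    using assms(3) rejT_def by blast
  define ts where "ts = map (\<lambda>C'. if C' = C then T else TNode C' []) Cs"
  have "map troot ts = Cs"
    unfolding ts_def map_map by (rule map_idI) (simp add: T(2))
  then have "is_tableau (TNode G ts)"
    using assms(1) T(1) by (auto simp: ts_def intro!: is_tableau.node is_tableau.leaf)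
  moreover have "hintikka_branch (TNode G ts)"
    using assms(2) T(3) by (force simp: ts_def intro: hintikka_branch.node)
  ultimately show ?thesis
    unfolding rejT_def by force
qed

primrec subformulas :: "fm \<Rightarrow> fm set" where
  "subformulas (Eps a b) = {Eps a b}"
| "subformulas (Or B C) = insert (Or B C) (subformulas B \<union> subformulas C)"
| "subformulas (Neg B) = insert (Neg B) (subformulas B)"

lemma finite_subformulas: "finite (subformulas A)"
  by (induction A) auto

lemma parts_subformulas: "(p, B) \<in># parts q A \<Longrightarrow> B \<in> subformulas A"
  by (induction A arbitrary: q) (auto split: if_splits)

lemma subformulas_trans: "B \<in> subformulas A \<Longrightarrow> subformulas B \<subseteq> subformulas A"
  by (induction A) auto

lemma names_subformulas: "B \<in> subformulas A \<Longrightarrow> names B \<subseteq> names A"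
  by (induction A) auto

definition universe :: "fm \<Rightarrow> fm set" where
  "universe A = subformulas A \<union> (\<lambda>(a, b). Eps a b) ` (names A \<times> names A)"

lemma finite_universe: "finite (universe A)"
  unfolding universe_def using finite_subformulas finite_names by auto

lemma negp_universe: "negp B A \<Longrightarrow> B \<in> universe A"
  unfolding universe_def negp_def using parts_subformulas by blast

lemma parts_universe: "B \<in> universe A \<Longrightarrow> (p, C) \<in># parts q B \<Longrightarrow> C \<in> universe A"
  unfolding universe_def
  by (auto dest!: parts_subformulas dest: subformulas_trans)

lemma Or_universe: "Or B C \<in> universe A \<Longrightarrow> B \<in> universe A \<and> C \<in> universe A"
  using parts_universe[of "Or B C" A True B True] parts_universe[of "Or B C" A True C True]
  by (simp add: parts_self)

lemma Eps_universe: "Eps a b \<in> universe A \<longleftrightarrow> a \<in> names A \<and> b \<in> names A"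
  unfolding universe_def using names_subformulas by fastforce

lemma expansion_decreases:
  assumes "{C. negp C G} \<subseteq> universe A" "B \<in> universe A" "\<not> negp B G"
  shows "{C. negp C (Or G (Neg B))} \<subseteq> universe A"
    and "card (universe A - {C. negp C (Or G (Neg B))}) < card (universe A - {C. negp C G})"
proof -
  show "{C. negp C (Or G (Neg B))} \<subseteq> universe A"
    using assms(1,2) parts_universe by (auto simp: negp_Or_Neg)
  have "negp B (Or G (Neg B))"
    by (simp add: negp_Or_Neg parts_self)
  then have "universe A - {C. negp C (Or G (Neg B))} \<subset> universe A - {C. negp C G}"
    using assms(2,3) by (auto simp: negp_Or_Neg)
  then show "card (universe A - {C. negp C (Or G (Neg B))}) < card (universe A - {C. negp C G})"
    by (simp add: finite_universe psubset_card_mono)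
qed

lemma two_negp_subset:
  assumes "negp B G" "negp C G" "B \<noteq> C"
  shows "{#(False, B), (False, C)#} \<subseteq># parts True G"
proof -
  obtain M where M: "parts True G = add_mset (False, B) M"
    using assms(1) unfolding negp_def by (blast dest: multi_member_split)
  then have "(False, C) \<in># M"
    using assms(2,3) by (simp add: negp_def)
  then show ?thesis
    by (simp add: M)
qed

lemma falsified_expansion_step:
  assumes e: "eps_model e" "\<not> eval e G" and "\<not> hintikka G"
    and neg: "{C. negp C G} \<subseteq> universe A"
  obtains B Cs where "rule_app G Cs" "Or G (Neg B) \<in> set Cs" "B \<in> universe A"
    "\<not> negp B G" "eval e B"
proof -
  have "\<nexists>B. posp B G \<and> negp B G"
    using e(2) negp_true posp_false by blast
  then consider (disj) B C where "negp (Or B C) G" "\<not> negp B G" "\<not> negp C G"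
    | (refl) a b where "negp (Eps a b) G" "\<not> negp (Eps a a) G"
    | (trans) a b c where "negp (Eps a b) G" "negp (Eps b c) G" "\<not> negp (Eps a c) G"
    | (sym) a b where "negp (Eps a b) G" "negp (Eps b b) G" "\<not> negp (Eps b a) G"
    using assms(3) unfolding hintikka_def by blast
  then show thesis
  proof cases
    case disj
    have rule: "rule_app G [Or G (Neg B), Or G (Neg C)]"
      using disj by (auto simp: rule_app_def)
    have "B \<in> universe A" "C \<in> universe A"
      using disj(1) neg Or_universe by blast+
    moreover have "eval e B \<or> eval e C"
      using negp_true[OF e(2) disj(1)] by simp
    ultimately show thesis
      using that[OF rule] disj by auto
  next
    case refl
    have "rule_app G [Or G (Neg (Eps a a))]"
      using refl(1) unfolding rule_app_def by blast
    moreover have "Eps a a \<in> universe A"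
      using refl(1) neg Eps_universe by blast
    moreover have "eval e (Eps a a)"
      using eps_model_refl[OF e(1)] negp_true[OF e(2) refl(1)] by simp
    ultimately show thesis
      using that refl(2) by simp
  next
    case trans
    then have "{#(False, Eps a b), (False, Eps b c)#} \<subseteq># parts True G"
      by (auto intro: two_negp_subset)
    then have "rule_app G [Or G (Neg (Eps a c))]"
      unfolding rule_app_def by blast
    moreover have "Eps a c \<in> universe A"
      using trans(1,2) neg Eps_universe by blast
    moreover have "eval e (Eps a c)"
      using eps_model_trans[OF e(1)] negp_true[OF e(2) trans(1)] negp_true[OF e(2) trans(2)] by simp
    ultimately show thesis
      using that trans(3) by simp
  next
    case sym
    then have "{#(False, Eps a b), (False, Eps b b)#} \<subseteq># parts True G"
      by (auto intro: two_negp_subset)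
    then have "rule_app G [Or G (Neg (Eps b a))]"
      unfolding rule_app_def by blast
    moreover have "Eps b a \<in> universe A"
      using sym(1) neg Eps_universe by blast
    moreover have "eval e (Eps b a)"
      using eps_model_sym[OF e(1)] negp_true[OF e(2) sym(1)] negp_true[OF e(2) sym(2)] by simp
    ultimately show thesis
      using that sym(3) by simp
  qed
qed

lemma rejT_falsified:
  assumes "eps_model e" "\<not> eval e G" "{C. negp C G} \<subseteq> universe A"
  shows "rejT G"
  using assms(2,3)
proof (induction "card (universe A - {C. negp C G})" arbitrary: G rule: less_induct)
  case less
  show ?case
  proof (cases "hintikka G")
    case True
    then show ?thesis by (rule rejT_hintikka)
  next
    case False
    obtain B Cs where step: "rule_app G Cs" "Or G (Neg B) \<in> set Cs" "B \<in> universe A"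
      "\<not> negp B G" "eval e B"
      using falsified_expansion_step[OF assms(1) less.prems(1) False less.prems(2)] .
    have "rejT (Or G (Neg B))"
      using less.hyps expansion_decreases[OF less.prems(2) step(3,4)] less.prems(1) step(5)
      by simp
    then show ?thesis
      using rejT_rule_app step(1,2) by blast
  qed
qed

lemma rejT_complete: "\<not> valid A \<Longrightarrow> rejT A"
  using rejT_falsified[of _ A A] negp_universe by (auto simp: valid_def)

section \<open>Completeness of axiomatic rejection\<close>

fun disj :: "fm list \<Rightarrow> fm" where
  "disj [] = Eps 0 0"
| "disj (A # As) = foldl Or A As"

lemma disj_snoc: "As \<noteq> [] \<Longrightarrow> disj (As @ [B]) = Or (disj As) B"
  by (cases As) auto

lemma eval_disj: "As \<noteq> [] \<Longrightarrow> eval e (disj As) = (\<exists>A\<in>set As. eval e A)"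
proof (induction As rule: rev_induct)
  case (snoc B As)
  then show ?case by (cases "As = []") (auto simp: disj_snoc)
qed simp

lemma subst_disj: "As \<noteq> [] \<Longrightarrow> subst s (disj As) = disj (map (subst s) As)"
proof (induction As rule: rev_induct)
  case (snoc B As)
  then show ?case by (cases "As = []") (auto simp: disj_snoc)
qed simp

definition literal :: "fm \<Rightarrow> bool" where
  "literal A \<longleftrightarrow> (\<exists>a b. A = Eps a b \<or> A = Neg (Eps a b))"

lemma litdisj_disj: "As \<noteq> [] \<Longrightarrow> \<forall>A\<in>set As. literal A \<Longrightarrow> litdisj (disj As)"
proof (induction As rule: rev_induct)
  case (snoc B As)
  then have "litdisj B"
    by (auto simp: literal_def intro: litdisj.intros)
  then show ?case
    using snoc by (cases "As = []") (auto simp: disj_snoc intro: litdisj.intros)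
qed simp

lemma negp_disj:
  "As \<noteq> [] \<Longrightarrow> \<forall>A\<in>set As. literal A \<Longrightarrow> negp B (disj As) \<longleftrightarrow> Neg B \<in> set As"
proof (induction As rule: rev_induct)
  case (snoc C As)
  then show ?case by (cases "As = []") (auto simp: disj_snoc literal_def negp_def)
qed simp

lemma posp_disj:
  "As \<noteq> [] \<Longrightarrow> \<forall>A\<in>set As. literal A \<Longrightarrow> posp (Eps a b) (disj As) \<longleftrightarrow> Eps a b \<in> set As"
proof (induction As rule: rev_induct)
  case (snoc C As)
  then show ?case by (cases "As = []") (auto simp: disj_snoc literal_def posp_def)
qed simp

lemma hintikka_disj:
  assumes "As \<noteq> []" "\<forall>A\<in>set As. literal A"
    and consistent: "\<And>a b. Neg (Eps a b) \<in> set As \<Longrightarrow> Eps a b \<notin> set As"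
    and model: "eps_model (\<lambda>a b. Neg (Eps a b) \<in> set As)"
  shows "hintikka (disj As)"
proof -
  note negp_iff = negp_disj[OF assms(1,2)]
  have negp_Eps: "negp B (disj As) \<Longrightarrow> \<exists>a b. B = Eps a b \<and> Neg (Eps a b) \<in> set As" for B
    using negp_iff assms(2) by (fastforce simp: literal_def)
  have "\<not> (posp B (disj As) \<and> negp B (disj As))" for B
    using negp_Eps posp_disj[OF assms(1,2)] consistent by blast
  moreover have "\<not> negp (Or B C) (disj As)" for B C
    using negp_Eps by blast
  moreover have "negp (Eps a b) (disj As) \<Longrightarrow> negp (Eps a a) (disj As)" for a b
    using eps_model_refl[OF model] by (simp add: negp_iff)
  moreover have "negp (Eps a b) (disj As) \<Longrightarrow> negp (Eps b c) (disj As) \<Longrightarrow> negp (Eps a c) (disj As)"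
    for a b c
    using eps_model_trans[OF model] by (simp add: negp_iff)
  moreover have "negp (Eps a b) (disj As) \<Longrightarrow> negp (Eps b b) (disj As) \<Longrightarrow> negp (Eps b a) (disj As)"
    for a b
    using eps_model_sym[OF model] by (simp add: negp_iff)
  ultimately show ?thesis
    unfolding hintikka_def by blast
qed

lemma rejH_disj_collapse:
  assumes "As \<noteq> []" "\<forall>A\<in>set As. subst s A = R" "rejH a0 R"
  shows "rejH a0 (disj As)"
proof -
  have "valid (Imp (disj (map (subst s) As)) R)"
    using assms(1,2) by (auto simp: valid_def eval_disj)
  then have "rejH a0 (subst s (disj As))"
    using rejH_valid_Imp assms(3) subst_disj[OF assms(1)] by metis
  then show ?thesis
    by (rule rejH.sub) (rule refl)
qed

definition neg_diagram :: "(nat \<Rightarrow> nat \<Rightarrow> bool) \<Rightarrow> nat list \<Rightarrow> fm list" where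
  "neg_diagram e ns = map (\<lambda>(a, b). Neg (Eps a b)) (filter (\<lambda>(a, b). e a b) (List.product ns ns))"

definition pos_diagram :: "(nat \<Rightarrow> nat \<Rightarrow> bool) \<Rightarrow> nat list \<Rightarrow> fm list" where
  "pos_diagram e ns = map (\<lambda>(a, b). Eps a b) (filter (\<lambda>(a, b). \<not> e a b) (List.product ns ns))"

lemma Neg_in_neg_diagram:
  "Neg B \<in> set (neg_diagram e ns) \<longleftrightarrow> (\<exists>a b. B = Eps a b \<and> a \<in> set ns \<and> b \<in> set ns \<and> e a b)"
  by (auto simp: neg_diagram_def)

lemma in_pos_diagram:
  "B \<in> set (pos_diagram e ns) \<longleftrightarrow> (\<exists>a b. B = Eps a b \<and> a \<in> set ns \<and> b \<in> set ns \<and> \<not> e a b)"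
  by (auto simp: pos_diagram_def)

lemma literal_diagram: "\<forall>A\<in>set (neg_diagram e ns @ pos_diagram e ns). literal A"
  by (auto simp: neg_diagram_def pos_diagram_def literal_def)

lemma diagram_nonempty:
  assumes "ns \<noteq> []"
  shows "neg_diagram e ns @ pos_diagram e ns \<noteq> []"
proof -
  obtain a where "a \<in> set ns"
    using assms by (cases ns) auto
  then show ?thesis
    using Neg_in_neg_diagram[of "Eps a a" e ns] in_pos_diagram[of "Eps a a" e ns]
    by (cases "e a a") auto
qed

text \<open>A countermodel of \<open>A\<close> is pinned down on the names of \<open>A\<close> by its diagram, so every
  model falsifying the diagram falsifies \<open>A\<close>.\<close>

lemma valid_Imp_diagram:
  assumes "\<not> eval e A" "set ns = names A"
  shows "valid (Imp A (disj (neg_diagram e ns @ pos_diagram e ns)))"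
proof -
  let ?D = "neg_diagram e ns @ pos_diagram e ns"
  have ne: "?D \<noteq> []"
    using assms(2) names_nonempty[of A] by (intro diagram_nonempty) auto
  have "\<not> eval e' A" if "\<not> eval e' (disj ?D)" for e'
  proof -
    have false: "\<not> eval e' B" if "B \<in> set ?D" for B
      using \<open>\<not> eval e' (disj ?D)\<close> that by (simp add: eval_disj[OF ne])
    have "e' a b = e a b" if "a \<in> names A" "b \<in> names A" for a b
    proof (cases "e a b")
      case True
      then have "Neg (Eps a b) \<in> set ?D"
        using that assms(2) by (simp add: Neg_in_neg_diagram)
      then show ?thesis using True false by force
    next
      case False
      then have "Eps a b \<in> set ?D"
        using that assms(2) by (simp add: in_pos_diagram)
      then show ?thesis using False false by force
    qed
    then show ?thesis
      using assms(1) eval_cong[of A e' e] by simp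
  qed
  then show ?thesis
    by (auto simp: valid_def)
qed

lemma hintikka_diagram_prefix:
  assumes "eps_model e" "neg_diagram e ns \<noteq> []" "set qs \<subseteq> set (pos_diagram e ns)"
  shows "hintikka (disj (neg_diagram e ns @ qs))"
proof -
  let ?D = "neg_diagram e ns @ qs"
  have negs: "Neg (Eps c d) \<in> set ?D \<longleftrightarrow> c \<in> set ns \<and> d \<in> set ns \<and> e c d" for c d
    using assms(3) by (auto simp: in_pos_diagram Neg_in_neg_diagram)
  show ?thesis
  proof (rule hintikka_disj)
    show "?D \<noteq> []" "\<forall>A\<in>set ?D. literal A"
      using assms(2,3) literal_diagram by auto
    show "Neg (Eps c d) \<in> set ?D \<Longrightarrow> Eps c d \<notin> set ?D" for c d
      using assms(3) negs by (auto simp: neg_diagram_def in_pos_diagram)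
    show "eps_model (\<lambda>c d. Neg (Eps c d) \<in> set ?D)"
      unfolding negs by (rule eps_model_restrict[OF assms(1)])
  qed
qed

text \<open>The negative literals collapse to \<open>\<not>\<epsilon>a\<^sub>0a\<^sub>0\<close>; the positive literals are then added
  one at a time by the extension rule, never contradicting the negative ones.\<close>

lemma rejH_diagram_prefix:
  assumes "eps_model e" "neg_diagram e ns \<noteq> []" "set qs \<subseteq> set (pos_diagram e ns)"
  shows "rejH a0 (disj (neg_diagram e ns @ qs))"
  using assms(3)
proof (induction qs rule: rev_induct)
  case Nil
  show ?case
    using rejH_disj_collapse[of _ "\<lambda>_. a0" "Neg (Eps a0 a0)"] rejH.ax_neg assms(2)
    by (auto simp: neg_diagram_def)
next
  case (snoc q qs)
  let ?D = "neg_diagram e ns @ qs"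
  obtain a b where q: "q = Eps a b" "a \<in> set ns" "b \<in> set ns" "\<not> e a b"
    using snoc.prems in_pos_diagram by auto
  have ne: "?D \<noteq> []" and lits: "\<forall>A\<in>set ?D. literal A"
    using assms(2) literal_diagram snoc.prems by auto
  have "\<not> negp (Eps a b) (disj ?D)"
    using negp_disj[OF ne lits] snoc.prems q by (auto simp: Neg_in_neg_diagram in_pos_diagram)
  then have "rejH a0 (Or (disj ?D) (Eps a b))"
    using rejH.ext hintikka_diagram_prefix[OF assms(1,2)] litdisj_disj[OF ne lits] snoc by simp
  then show ?case
    using disj_snoc[OF ne] q(1) by simp
qed

lemma rejH_diagram:
  assumes "eps_model e" "ns \<noteq> []"
  shows "rejH a0 (disj (neg_diagram e ns @ pos_diagram e ns))"
proof (cases "neg_diagram e ns = []")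
  case True
  have "\<forall>A\<in>set (pos_diagram e ns). subst (\<lambda>_. a0) A = Eps a0 a0"
    by (auto simp: pos_diagram_def)
  then show ?thesis
    using True rejH_disj_collapse rejH.ax_pos diagram_nonempty[OF assms(2)] by simp
next
  case False
  then show ?thesis
    using rejH_diagram_prefix[OF assms(1)] by simp
qed

lemma rejH_complete: "\<not> valid A \<Longrightarrow> rejH a0 A"
proof -
  assume "\<not> valid A"
  then obtain e where e: "eps_model e" "\<not> eval e A"
    by (auto simp: valid_def)
  obtain ns where ns: "set ns = names A"
    using finite_list[OF finite_names] by blast
  then have "ns \<noteq> []"
    using names_nonempty[of A] by auto
  then show ?thesis
    using rejH_valid_Imp valid_Imp_diagram[OF e(2) ns] rejH_diagram[OF e(1)] by blast
qed

theorem theorem8p2: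
  fixes a0 :: nat and A :: fm
  shows "rejH a0 A \<longleftrightarrow> rejT A"
proof -
  have "rejH a0 A \<longleftrightarrow> \<not> valid A"
    using rejH_sound rejH_complete by blast
  also have "\<dots> \<longleftrightarrow> rejT A"
    using rejT_sound rejT_complete by blast
  finally show ?thesis .
qed

end
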